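(* Let $\mathbb{F}$ be a finite field with $q$ elements, let $\mathbb{M}$ be the group of complex-valued characters of $\mathbb{F}^*$, and define for $\alpha,\beta\in\mathbb{M}$ \[ \mathbb{J}(\alpha,\beta)=\frac{1}{q-1}\sum_{\substack{x+y=1,\\ x,y\in\mathbb{F}^*}}\alpha(x)\beta(y). \] Then for all $\alpha_1,\alpha_2,\alpha_3,\alpha_4\in\mathbb{M}$, \[ \sum_{\beta\in\mathbb{M}}\mathbb{J}(\alpha_1\beta,\alpha_2\beta^{-1})\,\mathbb{J}(\alpha_3\beta,\alpha_4\beta^{-1})=\mathbb{J}(\alpha_1\alpha_4,\alpha_2\alpha_3). \]
   Context: Products and inverses of characters are pointwise. *)

theory Defs
  imports Complex_Main
begin

text \<open>Complex characters of the multiplicative group of a finite field, represented as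
  functions on the whole field, extended by 0 at 0 (so the set of characters is finite
  and in bijection with Hom(F^*, C^*)).\<close>
definition chars :: "('a::{field,finite} \<Rightarrow> complex) set" where
  "chars = {\<chi>. \<chi> 0 = 0 \<and> \<chi> 1 = 1 \<and>
              (\<forall>x y. x \<noteq> 0 \<longrightarrow> y \<noteq> 0 \<longrightarrow> \<chi> (x * y) = \<chi> x * \<chi> y)}"

definition jacobiJ :: "('a::{field,finite} \<Rightarrow> complex) \<Rightarrow> ('a \<Rightarrow> complex) \<Rightarrow> complex" where
  "jacobiJ \<alpha> \<beta> = (1 / (of_nat (card (UNIV::'a set)) - 1)) *
     (\<Sum>x\<in>{x::'a. x \<noteq> 0 \<and> 1 - x \<noteq> 0}. \<alpha> x * \<beta> (1 - x))"

end

theory Submission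
  imports Defs "HOL-Algebra.Multiplicative_Group"
begin

text \<open>Expanding both Jacobi sums, the product becomes \<open>(q - 1)\<^sup>-\<^sup>2\<close> times a double sum over
  \<open>x, y \<notin> {0, 1}\<close> of terms not involving \<open>\<beta>\<close>, times \<open>\<beta> (x y / ((1 - x) (1 - y)))\<close>.
  Summing over \<open>\<beta>\<close> first, orthogonality (\<open>\<Sum>\<^sub>\<beta> \<beta> w\<close> is \<open>q - 1\<close> for \<open>w = 1\<close> and \<open>0\<close> for
  any other \<open>w \<noteq> 0\<close>) keeps exactly the terms with \<open>x y = (1 - x) (1 - y)\<close>, i.e. \<open>y = 1 - x\<close>,
  each with weight \<open>q - 1\<close>; what remains is \<open>J(\<alpha>\<^sub>1\<alpha>\<^sub>4, \<alpha>\<^sub>2\<alpha>\<^sub>3)\<close>. Orthogonality comes from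
  the cyclicity of \<open>F\<^sup>*\<close>: evaluation at a generator identifies the characters with the
  \<open>(q - 1)\<close>-th roots of unity, whose \<open>j\<close>-th powers sum to zero unless \<open>q - 1\<close> divides \<open>j\<close>.\<close>

lemma card_UNIV_field_ge_2: "2 \<le> card (UNIV :: 'a::{field,finite} set)"
proof -
  have "card {0::'a, 1} \<le> card (UNIV :: 'a set)"
    by (rule card_mono) simp_all
  then show ?thesis by simp
qed

lemma finite_field_primitive_element:
  obtains g :: "'a::{field,finite}"
  where "g \<noteq> 0" and "\<And>x. x \<noteq> 0 \<Longrightarrow> \<exists>i. x = g ^ i"
    and "\<And>k. g ^ k = 1 \<longleftrightarrow> (card (UNIV :: 'a set) - 1) dvd k"
proof -
  \<comment> \<open>HOL-Algebra proves cyclicity for locale-based fields, so view the type as one.\<close>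
  define R :: "'a ring"
    where "R = \<lparr>carrier = UNIV, monoid.mult = (*), one = 1, zero = 0, add = (+)\<rparr>"
  have "field R"
  proof -
    have "\<exists>y. x + y = 0" for x :: 'a
      using add.right_inverse by blast
    moreover have "\<exists>y. x * y = 1" if "x \<noteq> 0" for x :: 'a
      using that by (intro exI[of _ "inverse x"]) simp
    ultimately show ?thesis
      unfolding R_def by unfold_locales (auto simp: algebra_simps Units_def)
  qed
  then interpret field R .
  interpret G: group "mult_of R" by (rule field_mult_group)
  have carrier: "carrier R = UNIV" and zero: "\<zero>\<^bsub>R\<^esub> = 0" and one: "\<one>\<^bsub>R\<^esub> = 1"
    by (simp_all add: R_def)
  have pow: "x [^]\<^bsub>mult_of R\<^esub> (i::nat) = x ^ i" for x i
    by (induction i) (simp_all add: nat_pow_mult_of R_def)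
  obtain g where g: "g \<in> carrier (mult_of R)"
    and gen: "carrier (mult_of R) = {g [^]\<^bsub>mult_of R\<^esub> i | i::nat. i \<in> UNIV}"
    using finite_field_mult_group_has_gen carrier by (auto simp: nat_pow_mult_of)
  have "G.ord g = card (generate (mult_of R) {g})"
    by (rule G.generate_pow_card[OF g])
  also have "generate (mult_of R) {g} = carrier (mult_of R)"
    using G.generate_pow_on_finite_carrier[OF _ g] gen carrier by (simp add: finite_mult_of)
  also have "card \<dots> = card (UNIV :: 'a set) - 1"
    by (simp add: carrier zero card_Diff_singleton)
  finally have ord: "G.ord g = card (UNIV :: 'a set) - 1" .
  show thesis
  proof
    show "g \<noteq> 0"
      using g zero by simp
    show "\<exists>i. x = g ^ i" if "x \<noteq> 0" for x
      using that gen carrier zero pow by auto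
    show "g ^ k = 1 \<longleftrightarrow> (card (UNIV :: 'a set) - 1) dvd k" for k
      using G.pow_eq_id[OF g, of k] ord pow one by simp
  qed
qed

lemma power_exponent_mod:
  fixes z :: "'a::monoid_mult"
  assumes "z ^ n = 1"
  shows "z ^ (i mod n) = z ^ i"
proof -
  have "z ^ i = (z ^ n) ^ (i div n) * z ^ (i mod n)"
    by (simp flip: power_mult power_add)
  with assms show ?thesis by simp
qed

lemma power_eq_power_imp_mod_eq:
  fixes g :: "'a::field"
  assumes "g \<noteq> 0" and ord: "\<And>k. g ^ k = 1 \<longleftrightarrow> n dvd k" and "g ^ i = g ^ j"
  shows "i mod n = j mod n"
proof -
  have "i mod n = j mod n" if "g ^ i = g ^ j" "i \<le> j" for i j
  proof -
    have "g ^ i * g ^ (j - i) = g ^ j"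
      using that(2) by (simp flip: power_add)
    also have "\<dots> = g ^ i * 1"
      using that(1) by simp
    finally have "g ^ i * g ^ (j - i) = g ^ i * 1" .
    then have "n dvd j - i"
      using \<open>g \<noteq> 0\<close> ord by simp
    then show ?thesis
      using that(2) by (metis mod_eq_dvd_iff_nat)
  qed
  then show ?thesis
    using assms(3) by (metis nat_le_linear)
qed

lemma sum_roots_unity_power:
  assumes "n > 0"
  shows "(\<Sum>z | z ^ n = 1. z ^ j) = (if n dvd j then of_nat n else (0::complex))"
proof (cases "n dvd j")
  case True
  then have "z ^ j = 1" if "z ^ n = 1" for z :: complex
    using that by (auto simp: power_mult)
  then show ?thesis
    using True card_roots_unity_eq[OF assms] by simp
next
  case False
  define R where "R = {z::complex. z ^ n = 1}"
  define \<zeta> where "\<zeta> = cis (2 * pi / real n)"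
  have \<zeta>_power: "\<zeta> ^ k = cis (2 * pi * real k / real n)" for k
    by (simp add: \<zeta>_def DeMoivre mult_ac)
  have "\<zeta> ^ n = 1"
    using assms by (simp add: \<zeta>_power)
  have "\<zeta> ^ j \<noteq> 1"
  proof
    assume "\<zeta> ^ j = 1"
    then have eq: "cis (2 * pi * real (j mod n) / real n) = cis (2 * pi * real 0 / real n)"
      using power_exponent_mod[OF \<open>\<zeta> ^ n = 1\<close>, of j] by (simp add: \<zeta>_power)
    have inj: "inj_on (\<lambda>k. cis (2 * pi * real k / real n)) {..<n}"
      using bij_betw_roots_unity[OF assms] by (simp add: bij_betw_def)
    have "j mod n = 0"
      using inj_onD[OF inj eq] assms by simp
    with False show False by auto
  qed
  have "bij_betw (\<lambda>z. \<zeta> * z) R R"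
    using \<open>\<zeta> ^ n = 1\<close> assms
    by (intro bij_betwI[where g = "\<lambda>z. z / \<zeta>"])
      (auto simp: R_def power_mult_distrib power_divide power_0_left)
  then have "(\<Sum>z\<in>R. z ^ j) = (\<Sum>z\<in>R. (\<zeta> * z) ^ j)"
    by (rule sum.reindex_bij_betw[symmetric])
  also have "\<dots> = \<zeta> ^ j * (\<Sum>z\<in>R. z ^ j)"
    by (simp add: power_mult_distrib sum_distrib_left)
  finally show ?thesis
    using \<open>\<zeta> ^ j \<noteq> 1\<close> False by (simp add: R_def)
qed

lemma chars_zero: "\<chi> \<in> chars \<Longrightarrow> \<chi> 0 = 0"
  and chars_one: "\<chi> \<in> chars \<Longrightarrow> \<chi> 1 = 1"
  by (simp_all add: chars_def)

lemma chars_mult: "\<chi> \<in> chars \<Longrightarrow> \<chi> (x * y) = \<chi> x * \<chi> y"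
  by (cases "x = 0 \<or> y = 0") (auto simp: chars_def)

lemma chars_power: "\<chi> \<in> chars \<Longrightarrow> \<chi> (x ^ i) = \<chi> x ^ i"
  by (induction i) (simp_all add: chars_one chars_mult)

lemma chars_inverse: "\<chi> \<in> chars \<Longrightarrow> \<chi> (inverse x) = inverse (\<chi> x)"
proof (cases "x = 0")
  case False
  assume "\<chi> \<in> chars"
  then have "\<chi> x * \<chi> (inverse x) = 1"
    using False by (simp flip: chars_mult add: chars_one)
  then show ?thesis by (simp add: inverse_unique)
qed (simp add: chars_zero)

lemma bij_betw_chars_roots_unity:
  fixes g :: "'a::{field,finite}"
  assumes "g \<noteq> 0" and gen: "\<And>x. x \<noteq> 0 \<Longrightarrow> \<exists>i. x = g ^ i"
    and ord: "\<And>k. g ^ k = 1 \<longleftrightarrow> (card (UNIV :: 'a set) - 1) dvd k"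
  shows "bij_betw (\<lambda>\<chi>. \<chi> g) chars {z. z ^ (card (UNIV :: 'a set) - 1) = 1}"
proof -
  define n where "n = card (UNIV :: 'a set) - 1"
  have "inj_on (\<lambda>\<chi>. \<chi> g) chars"
  proof (rule inj_onI)
    fix \<chi> \<psi> :: "'a \<Rightarrow> complex"
    assume chars: "\<chi> \<in> chars" "\<psi> \<in> chars" and "\<chi> g = \<psi> g"
    have "\<chi> x = \<psi> x" for x
    proof (cases "x = 0")
      case False
      then obtain i where "x = g ^ i"
        using gen by blast
      then show ?thesis
        using chars \<open>\<chi> g = \<psi> g\<close> by (simp add: chars_power)
    qed (simp add: chars chars_zero)
    then show "\<chi> = \<psi>" ..
  qed
  moreover have "(\<lambda>\<chi>. \<chi> g) ` chars = {z. z ^ n = 1}"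
  proof (intro equalityI subsetI)
    fix z assume "z \<in> (\<lambda>\<chi>. \<chi> g) ` chars"
    then obtain \<chi> where "\<chi> \<in> chars" "z = \<chi> g" by blast
    then show "z \<in> {z. z ^ n = 1}"
      using ord[of n] by (simp flip: chars_power add: chars_one n_def)
  next
    fix \<omega> :: complex assume "\<omega> \<in> {z. z ^ n = 1}"
    then have \<omega>: "\<omega> ^ n = 1" by simp
    define dlog where "dlog x = (SOME i. x = g ^ i)" for x
    define \<chi> where "\<chi> x = (if x = 0 then 0 else \<omega> ^ dlog x)" for x
    have \<chi>_power: "\<chi> (g ^ i) = \<omega> ^ i" for i
    proof -
      have "g ^ i = g ^ dlog (g ^ i)"
        unfolding dlog_def by (rule someI[where x = i]) (rule refl)
      then have "dlog (g ^ i) mod n = i mod n"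
        using power_eq_power_imp_mod_eq[OF \<open>g \<noteq> 0\<close> ord[folded n_def]] by metis
      have "\<chi> (g ^ i) = \<omega> ^ (dlog (g ^ i) mod n)"
        using \<open>g \<noteq> 0\<close> by (simp add: \<chi>_def power_exponent_mod[OF \<omega>])
      also have "\<dots> = \<omega> ^ i"
        using \<open>dlog (g ^ i) mod n = i mod n\<close> by (simp add: power_exponent_mod[OF \<omega>])
      finally show ?thesis .
    qed
    have "\<chi> \<in> chars"
      unfolding chars_def
    proof (intro CollectI conjI allI impI)
      show "\<chi> 0 = 0" by (simp add: \<chi>_def)
      show "\<chi> 1 = 1"
        using \<chi>_power[of 0] by simp
      fix x y :: 'a assume "x \<noteq> 0" "y \<noteq> 0"
      then obtain i j where "x = g ^ i" "y = g ^ j"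
        using gen by blast
      then show "\<chi> (x * y) = \<chi> x * \<chi> y"
        by (simp flip: power_add add: \<chi>_power)
    qed
    moreover have "\<chi> g = \<omega>"
      using \<chi>_power[of 1] by simp
    ultimately show "\<omega> \<in> (\<lambda>\<chi>. \<chi> g) ` chars" by blast
  qed
  ultimately show ?thesis
    by (simp add: bij_betw_def n_def)
qed

lemma sum_chars:
  fixes x :: "'a::{field,finite}"
  assumes "x \<noteq> 0"
  shows "(\<Sum>\<chi>\<in>chars. \<chi> x) = (if x = 1 then of_nat (card (UNIV :: 'a set) - 1) else 0)"
proof -
  obtain g :: 'a where "g \<noteq> 0" and gen: "\<And>x. x \<noteq> 0 \<Longrightarrow> \<exists>i. x = g ^ i"
    and ord: "\<And>k. g ^ k = 1 \<longleftrightarrow> (card (UNIV :: 'a set) - 1) dvd k"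
    using finite_field_primitive_element by metis
  define n where "n = card (UNIV :: 'a set) - 1"
  obtain j where x: "x = g ^ j"
    using gen assms by blast
  have "n > 0"
    using card_UNIV_field_ge_2[where 'a = 'a] by (simp add: n_def)
  have "(\<Sum>\<chi>\<in>chars. \<chi> x) = (\<Sum>\<chi>\<in>chars. \<chi> g ^ j)"
    using x by (intro sum.cong) (simp_all add: chars_power)
  also have "\<dots> = (\<Sum>z | z ^ n = 1. z ^ j)"
    using bij_betw_chars_roots_unity[OF \<open>g \<noteq> 0\<close> gen ord, folded n_def]
    by (rule sum.reindex_bij_betw)
  also have "\<dots> = (if x = 1 then of_nat n else 0)"
    using sum_roots_unity_power[OF \<open>n > 0\<close>] x ord[folded n_def] by simp
  finally show ?thesis
    by (simp add: n_def)
qed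

lemma sum_chars_jacobi_weights:
  fixes x y :: "'a::{field,finite}"
  assumes "x \<noteq> 0" "1 - x \<noteq> 0" "y \<noteq> 0" "1 - y \<noteq> 0"
  shows "(\<Sum>\<beta>\<in>chars. \<beta> x * inverse (\<beta> (1 - x)) * (\<beta> y * inverse (\<beta> (1 - y))))
           = (if y = 1 - x then of_nat (card (UNIV :: 'a set) - 1) else 0)"
proof -
  define w where "w = x * y / ((1 - x) * (1 - y))"
  have "w \<noteq> 0"
    using assms by (simp add: w_def)
  have "w = 1 \<longleftrightarrow> x * y = (1 - x) * (1 - y)"
    using assms by (simp add: w_def divide_eq_1_iff)
  also have "\<dots> \<longleftrightarrow> y = 1 - x"
    by (auto simp: algebra_simps)
  finally have "w = 1 \<longleftrightarrow> y = 1 - x" .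
  have "(\<Sum>\<beta>\<in>chars. \<beta> x * inverse (\<beta> (1 - x)) * (\<beta> y * inverse (\<beta> (1 - y))))
          = (\<Sum>\<beta>\<in>chars. \<beta> w)"
    by (intro sum.cong) (simp_all add: w_def divide_inverse chars_mult chars_inverse mult_ac)
  then show ?thesis
    using sum_chars[OF \<open>w \<noteq> 0\<close>] \<open>w = 1 \<longleftrightarrow> y = 1 - x\<close> by simp
qed

lemma sum_chars_jacobiJ_product:
  fixes \<alpha>1 \<alpha>2 \<alpha>3 \<alpha>4 :: "'a::{field,finite} \<Rightarrow> complex"
  shows "(\<Sum>\<beta>\<in>chars.
            jacobiJ (\<lambda>x. \<alpha>1 x * \<beta> x) (\<lambda>x. \<alpha>2 x * inverse (\<beta> x)) *
            jacobiJ (\<lambda>x. \<alpha>3 x * \<beta> x) (\<lambda>x. \<alpha>4 x * inverse (\<beta> x)))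
         = jacobiJ (\<lambda>x. \<alpha>1 x * \<alpha>4 x) (\<lambda>x. \<alpha>2 x * \<alpha>3 x)"
proof -
  define N :: complex where "N = of_nat (card (UNIV :: 'a set)) - 1"
  define S where "S = {x::'a. x \<noteq> 0 \<and> 1 - x \<noteq> 0}"
  define A where "A x = \<alpha>1 x * \<alpha>2 (1 - x)" for x
  define B where "B y = \<alpha>3 y * \<alpha>4 (1 - y)" for y
  define weight
    where "weight \<beta> x y = \<beta> x * inverse (\<beta> (1 - x)) * (\<beta> y * inverse (\<beta> (1 - y)))"
    for \<beta> :: "'a \<Rightarrow> complex" and x y
  have J: "jacobiJ f h = (\<Sum>x\<in>S. f x * h (1 - x)) / N" for f h :: "'a \<Rightarrow> complex"
    by (simp add: jacobiJ_def N_def S_def)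
  have N: "N = of_nat (card (UNIV :: 'a set) - 1)" "N \<noteq> 0"
    using card_UNIV_field_ge_2[where 'a = 'a] by (simp_all add: N_def of_nat_diff)
  have "(\<Sum>\<beta>\<in>chars.
            jacobiJ (\<lambda>x. \<alpha>1 x * \<beta> x) (\<lambda>x. \<alpha>2 x * inverse (\<beta> x)) *
            jacobiJ (\<lambda>x. \<alpha>3 x * \<beta> x) (\<lambda>x. \<alpha>4 x * inverse (\<beta> x)))
      = (\<Sum>\<beta>\<in>chars. \<Sum>x\<in>S. \<Sum>y\<in>S. A x * B y * weight \<beta> x y) / N\<^sup>2"
    by (simp add: J sum_product sum_divide_distrib power2_eq_square A_def B_def weight_def
        mult_ac)
  also have "\<dots> = (\<Sum>x\<in>S. \<Sum>y\<in>S. A x * B y * (\<Sum>\<beta>\<in>chars. weight \<beta> x y)) / N\<^sup>2"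
    by (simp add: sum_distrib_left sum.swap[of _ chars])
  also have "\<dots> = (\<Sum>x\<in>S. \<Sum>y\<in>S. if y = 1 - x then A x * B y * N else 0) / N\<^sup>2"
    unfolding weight_def using N(1)
    by (intro arg_cong[where f = "\<lambda>t. t / N\<^sup>2"] sum.cong refl)
      (simp add: S_def sum_chars_jacobi_weights)
  also have "\<dots> = (\<Sum>x\<in>S. A x * B (1 - x)) / N"
    using N(2) by (simp add: S_def sum.delta' power2_eq_square flip: sum_distrib_right)
  also have "\<dots> = jacobiJ (\<lambda>x. \<alpha>1 x * \<alpha>4 x) (\<lambda>x. \<alpha>2 x * \<alpha>3 x)"
    by (simp add: J A_def B_def mult_ac)
  finally show ?thesis .
qed

theorem mainTheorem4:
  fixes \<alpha>1 \<alpha>2 \<alpha>3 \<alpha>4 :: "'a::{field,finite} \<Rightarrow> complex"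
  assumes "\<alpha>1 \<in> chars" "\<alpha>2 \<in> chars" "\<alpha>3 \<in> chars" "\<alpha>4 \<in> chars"
  shows "(\<Sum>\<beta>\<in>chars.
            jacobiJ (\<lambda>x. \<alpha>1 x * \<beta> x) (\<lambda>x. \<alpha>2 x * inverse (\<beta> x)) *
            jacobiJ (\<lambda>x. \<alpha>3 x * \<beta> x) (\<lambda>x. \<alpha>4 x * inverse (\<beta> x)))
         = jacobiJ (\<lambda>x. \<alpha>1 x * \<alpha>4 x) (\<lambda>x. \<alpha>2 x * \<alpha>3 x)"
  by (rule sum_chars_jacobiJ_product)

end
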